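(* Let $R=k[x_1,\dots,x_m]$ be a polynomial ring over a field $k$, $\lambda:\mathbb Z^m\to\mathbb Z$ a linear map, and $I$ a homogeneous ideal of $R$. With the notation $\widetilde L$ defined in the context, for all $n\ge0$, $$\widetilde{I^n}=\widetilde I^{\,n}:\langle t\rangle=\bigcup_{r\ge0}(\widetilde I^{\,n}:t^r).$$
   Context: For a monomial $u=x^b$ set $\lambda(u)=\lambda(b)$. For $0\ne g=\sum a_iu_i\in R$ ($a_i\in k\setminus\{0\}$, $u_i$ distinct monomials) with $b(g)=\max\lambda(u_i)$, put $g^*=t^{b(g)}g(t^{-\lambda(x_1)}x_1,\dots,t^{-\lambda(x_m)}x_m)\in R[t]$, where $t$ is a new variable. For an ideal $L\subseteq R$ let $L^*\subseteq R[t]$ be the ideal generated by $\{g^*: g\in L\}$, let $S=k[t]_{(t)}[x_1,\dots,x_m]$, and set $\widetilde L=L^*S$. *)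

theory Defs
  imports "HOL-Library.Poly_Mapping" "HOL-Computational_Algebra.Fraction_Field"
begin

text \<open>Polynomials over a field k in the variables indexed by nat.
  Convention: x_1,...,x_m are the variables with indices 0,...,m-1 and the
  new variable t is the variable with index m.\<close>

type_synonym 'k mpoly = "(nat \<Rightarrow>\<^sub>0 nat) \<Rightarrow>\<^sub>0 'k"

definition polys_in :: "nat set \<Rightarrow> 'k::field mpoly set" where
  "polys_in V = {p. \<forall>b \<in> Poly_Mapping.keys p. Poly_Mapping.keys b \<subseteq> V}"

definition Rring :: "nat \<Rightarrow> 'k::field mpoly set" where
  "Rring m = polys_in {..<m}"

definition Rtring :: "nat \<Rightarrow> 'k::field mpoly set" where
  "Rtring m = polys_in {..m}"

definition tvar :: "nat \<Rightarrow> 'k::field mpoly" where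
  "tvar m = Poly_Mapping.single (Poly_Mapping.single m 1) 1"

definition ideal_in :: "'a::comm_ring_1 set \<Rightarrow> 'a set \<Rightarrow> bool" where
  "ideal_in A J \<longleftrightarrow> J \<subseteq> A \<and> 0 \<in> J \<and> (\<forall>x\<in>J. \<forall>y\<in>J. x + y \<in> J)
     \<and> (\<forall>a\<in>A. \<forall>x\<in>J. a * x \<in> J)"

definition ideal_gen :: "'a::comm_ring_1 set \<Rightarrow> 'a set \<Rightarrow> 'a set" where
  "ideal_gen A X = \<Inter>{J. ideal_in A J \<and> X \<subseteq> J}"

definition ideal_pow :: "'a::comm_ring_1 set \<Rightarrow> 'a set \<Rightarrow> nat \<Rightarrow> 'a set" where
  "ideal_pow A J n = ideal_gen A {prod_list xs | xs. length xs = n \<and> set xs \<subseteq> J}"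

definition colon :: "'a::comm_ring_1 set \<Rightarrow> 'a set \<Rightarrow> 'a \<Rightarrow> 'a set" where
  "colon A J s = {a \<in> A. s * a \<in> J}"

definition saturation :: "'a::comm_ring_1 set \<Rightarrow> 'a set \<Rightarrow> 'a \<Rightarrow> 'a set" where
  "saturation A J s = (\<Union>r. colon A J (s ^ r))"

definition mdeg :: "(nat \<Rightarrow>\<^sub>0 nat) \<Rightarrow> nat" where
  "mdeg b = (\<Sum>i\<in>Poly_Mapping.keys b. Poly_Mapping.lookup b i)"

definition hcomp :: "nat \<Rightarrow> 'k::field mpoly \<Rightarrow> 'k mpoly" where
  "hcomp d f = (\<Sum>b\<in>{b \<in> Poly_Mapping.keys f. mdeg b = d}. Poly_Mapping.single b (Poly_Mapping.lookup f b))"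

definition homogeneous_ideal :: "nat \<Rightarrow> 'k::field mpoly set \<Rightarrow> bool" where
  "homogeneous_ideal m I \<longleftrightarrow> ideal_in (Rring m) I \<and> (\<forall>f\<in>I. \<forall>d. hcomp d f \<in> I)"

text \<open>The weight lambda(b) = sum_i c_i b_i of a linear map Z^m -> Z.\<close>
definition wt :: "nat \<Rightarrow> (nat \<Rightarrow> int) \<Rightarrow> (nat \<Rightarrow>\<^sub>0 nat) \<Rightarrow> int" where
  "wt m c b = (\<Sum>i<m. c i * int (Poly_Mapping.lookup b i))"

definition bmax :: "nat \<Rightarrow> (nat \<Rightarrow> int) \<Rightarrow> 'k::field mpoly \<Rightarrow> int" where
  "bmax m c g = Max (wt m c ` Poly_Mapping.keys g)"

text \<open>g^* = t^{b(g)} g(t^{-lambda(x_1)} x_1, ..., t^{-lambda(x_m)} x_m)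
  = sum_i a_i t^{b(g) - lambda(u_i)} u_i.\<close>
definition gstar :: "nat \<Rightarrow> (nat \<Rightarrow> int) \<Rightarrow> 'k::field mpoly \<Rightarrow> 'k mpoly" where
  "gstar m c g = (\<Sum>b\<in>Poly_Mapping.keys g.
      Poly_Mapping.single (b + Poly_Mapping.single m (nat (bmax m c g - wt m c b))) (Poly_Mapping.lookup g b))"

definition Lstar :: "nat \<Rightarrow> (nat \<Rightarrow> int) \<Rightarrow> 'k::field mpoly set \<Rightarrow> 'k mpoly set" where
  "Lstar m c L = ideal_gen (Rtring m) (gstar m c ` (L - {0}))"

text \<open>S = k[t]_(t)[x_1,...,x_m], realised inside the fraction field of the
  polynomial ring: fractions f/u with f in R[t], u in k[t], u(0) \<noteq> 0.\<close>
definition Uset :: "nat \<Rightarrow> 'k::field mpoly set" where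
  "Uset m = {u \<in> polys_in {m}. Poly_Mapping.lookup u 0 \<noteq> 0}"

definition Sring :: "nat \<Rightarrow> 'k::field mpoly fract set" where
  "Sring m = {Fract f u | f u. f \<in> Rtring m \<and> u \<in> Uset m}"

definition emb :: "'k::field mpoly \<Rightarrow> 'k mpoly fract" where
  "emb f = Fract f 1"

definition Ltilde :: "nat \<Rightarrow> (nat \<Rightarrow> int) \<Rightarrow> 'k::field mpoly set \<Rightarrow> 'k mpoly fract set" where
  "Ltilde m c L = ideal_gen (Sring m) (emb ` Lstar m c L)"

end

theory Submission
  imports Defs
begin

text \<open>Give \<open>R[t]\<close> the grading in which \<open>x\<^sub>i\<close> has degree \<open>\<lambda>(x\<^sub>i)\<close> and \<open>t\<close> has degree 1.
  A polynomial lies in \<open>L\<^sup>*\<close> iff each of its homogeneous components lies in \<open>L\<close> after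
  setting \<open>t = 1\<close>; as multiplication by \<open>t\<close> only shifts components, \<open>L\<^sup>*\<close> and therefore
  \<open>L\<^sup>* S\<close> are saturated with respect to \<open>t\<close>. A product of elements \<open>g\<^sub>i\<^sup>*\<close> is a homogenization
  of \<open>\<Prod> g\<^sub>i\<close>, so \<open>(I\<^sup>*)\<^sup>n \<subseteq> (I\<^sup>n)\<^sup>*\<close>; together with saturation this gives the inclusion from
  right to left. Conversely, the elements of \<open>R\<close> having some homogenization in \<open>(I\<^sup>*)\<^sup>n\<close>
  form an ideal containing all products of \<open>n\<close> elements of \<open>I\<close>; hence every \<open>g \<in> I\<^sup>n\<close> has some
  \<open>t\<^sup>r g\<^sup>*\<close> in \<open>(I\<^sup>*)\<^sup>n\<close>.\<close>

section \<open>Ideals of a subring\<close>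

definition is_subring :: "'a::comm_ring_1 set \<Rightarrow> bool" where
  "is_subring A \<longleftrightarrow> 0 \<in> A \<and> 1 \<in> A \<and> (\<forall>x\<in>A. \<forall>y\<in>A. x + y \<in> A \<and> x * y \<in> A)"

lemma is_subring_prod_list: "is_subring A \<Longrightarrow> set xs \<subseteq> A \<Longrightarrow> prod_list xs \<in> A"
  by (induction xs) (auto simp: is_subring_def)

lemma is_subring_power: "is_subring A \<Longrightarrow> x \<in> A \<Longrightarrow> x ^ k \<in> A"
  by (induction k) (auto simp: is_subring_def)

lemma ideal_in_subset: "ideal_in A J \<Longrightarrow> J \<subseteq> A"
  by (simp add: ideal_in_def)

lemma ideal_in_zero: "ideal_in A J \<Longrightarrow> 0 \<in> J"
  by (simp add: ideal_in_def)

lemma ideal_in_add: "ideal_in A J \<Longrightarrow> x \<in> J \<Longrightarrow> y \<in> J \<Longrightarrow> x + y \<in> J"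
  by (simp add: ideal_in_def)

lemma ideal_in_mult: "ideal_in A J \<Longrightarrow> a \<in> A \<Longrightarrow> x \<in> J \<Longrightarrow> a * x \<in> J"
  by (simp add: ideal_in_def)

lemma ideal_in_mult_right: "ideal_in A J \<Longrightarrow> a \<in> A \<Longrightarrow> x \<in> J \<Longrightarrow> x * a \<in> J"
  by (simp add: ideal_in_def mult.commute)

lemma ideal_in_sum: "ideal_in A J \<Longrightarrow> (\<And>i. i \<in> S \<Longrightarrow> f i \<in> J) \<Longrightarrow> sum f S \<in> J"
  by (induction S rule: infinite_finite_induct) (auto simp: ideal_in_def)

lemma ideal_in_carrier: "is_subring A \<Longrightarrow> ideal_in A A"
  by (simp add: is_subring_def ideal_in_def)

lemma ideal_gen_superset: "X \<subseteq> ideal_gen A X"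
  unfolding ideal_gen_def by blast

lemma ideal_gen_least: "ideal_in A J \<Longrightarrow> X \<subseteq> J \<Longrightarrow> ideal_gen A X \<subseteq> J"
  unfolding ideal_gen_def by blast

lemma ideal_in_Inter: "\<F> \<noteq> {} \<Longrightarrow> (\<And>J. J \<in> \<F> \<Longrightarrow> ideal_in A J) \<Longrightarrow> ideal_in A (\<Inter>\<F>)"
  unfolding ideal_in_def by blast

lemma ideal_in_ideal_gen:
  assumes "is_subring A" "X \<subseteq> A"
  shows "ideal_in A (ideal_gen A X)"
  unfolding ideal_gen_def
proof (rule ideal_in_Inter)
  show "{J. ideal_in A J \<and> X \<subseteq> J} \<noteq> {}"
    using assms ideal_in_carrier by blast
qed simp

lemma ideal_in_ideal_pow:
  assumes A: "is_subring A" and J: "J \<subseteq> A"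
  shows "ideal_in A (ideal_pow A J n)"
  unfolding ideal_pow_def
proof (rule ideal_in_ideal_gen[OF A], safe)
  fix xs :: "'a list" assume "set xs \<subseteq> J"
  then show "prod_list xs \<in> A"
    using J by (intro is_subring_prod_list[OF A]) auto
qed

lemma prod_list_in_ideal_pow: "length xs = n \<Longrightarrow> set xs \<subseteq> J \<Longrightarrow> prod_list xs \<in> ideal_pow A J n"
  unfolding ideal_pow_def
  by (rule subsetD[OF ideal_gen_superset]) (intro CollectI exI[of _ xs] conjI refl)

lemma ideal_pow_least:
  assumes "ideal_in A K" "\<And>xs. length xs = n \<Longrightarrow> set xs \<subseteq> J \<Longrightarrow> prod_list xs \<in> K"
  shows "ideal_pow A J n \<subseteq> K"
  unfolding ideal_pow_def by (rule ideal_gen_least[OF assms(1)]) (use assms(2) in auto)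

lemma ideal_in_colon:
  assumes A: "is_subring A" and K: "ideal_in A K" and s: "s \<in> A"
  shows "ideal_in A (colon A K s)"
  unfolding ideal_in_def
proof (intro conjI ballI)
  show "colon A K s \<subseteq> A"
    by (simp add: colon_def)
  show "0 \<in> colon A K s"
    using A ideal_in_zero[OF K] by (simp add: colon_def is_subring_def)
next
  fix x y assume "x \<in> colon A K s" "y \<in> colon A K s"
  then show "x + y \<in> colon A K s"
    using A ideal_in_add[OF K] by (simp add: colon_def is_subring_def distrib_left)
next
  fix a x assume "a \<in> A" "x \<in> colon A K s"
  then show "a * x \<in> colon A K s"
    using A ideal_in_mult[OF K, of a "s * x"] by (simp add: colon_def is_subring_def mult.left_commute)
qed

lemma ideal_pow_ideal_gen_least:
  assumes A: "is_subring A" and X: "X \<subseteq> A" and K: "ideal_in A K"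
    and gen: "\<And>ys. length ys = n \<Longrightarrow> set ys \<subseteq> X \<Longrightarrow> prod_list ys \<in> K"
  shows "ideal_pow A (ideal_gen A X) n \<subseteq> K"
proof (rule ideal_pow_least[OF K])
  have gen_A: "ideal_gen A X \<subseteq> A"
    using ideal_in_subset[OF ideal_in_ideal_gen[OF A X]] .
  \<comment> \<open>Replace the factors from the generated ideal by generators one at a time.\<close>
  have "prod_list xs * prod_list ys \<in> K"
    if "set xs \<subseteq> ideal_gen A X" "set ys \<subseteq> X" "length xs + length ys = n" for xs ys
    using that
  proof (induction xs arbitrary: ys)
    case Nil
    then show ?case using gen by simp
  next
    case (Cons x xs)
    let ?p = "prod_list xs * prod_list ys"
    have "prod_list xs \<in> A" "prod_list ys \<in> A"
      using Cons.prems gen_A X by (auto intro!: is_subring_prod_list[OF A])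
    then have "?p \<in> A"
      using A by (simp add: is_subring_def)
    then have "ideal_in A (colon A K ?p)"
      by (rule ideal_in_colon[OF A K])
    moreover have "X \<subseteq> colon A K ?p"
    proof
      fix y assume "y \<in> X"
      have "prod_list xs * prod_list (y # ys) \<in> K"
        using Cons.prems \<open>y \<in> X\<close> by (intro Cons.IH) simp_all
      then show "y \<in> colon A K ?p"
        using \<open>y \<in> X\<close> X by (auto simp: colon_def ac_simps)
    qed
    ultimately have "ideal_gen A X \<subseteq> colon A K ?p"
      by (rule ideal_gen_least)
    then have "x \<in> colon A K ?p"
      using Cons.prems(1) by auto
    then show ?case
      by (simp add: colon_def ac_simps)
  qed
  from this[of _ "[]"] show "prod_list xs \<in> K" if "length xs = n" "set xs \<subseteq> ideal_gen A X" for xs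
    using that by simp
qed

lemma ideal_in_saturation:
  assumes A: "is_subring A" and J: "ideal_in A J" and s: "s \<in> A"
  shows "ideal_in A (saturation A J s)"
  unfolding ideal_in_def
proof (intro conjI ballI)
  show "saturation A J s \<subseteq> A"
    by (auto simp: saturation_def colon_def)
  have "0 \<in> colon A J (s ^ 0)"
    using A ideal_in_zero[OF J] by (simp add: colon_def is_subring_def)
  then show "0 \<in> saturation A J s"
    unfolding saturation_def by blast
next
  fix x y assume "x \<in> saturation A J s" "y \<in> saturation A J s"
  then obtain r q where x: "x \<in> A" "s ^ r * x \<in> J" and y: "y \<in> A" "s ^ q * y \<in> J"
    by (auto simp: saturation_def colon_def)
  have "s ^ (r + q) * (x + y) = s ^ q * (s ^ r * x) + s ^ r * (s ^ q * y)"
    by (simp add: power_add algebra_simps)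
  also have "\<dots> \<in> J"
    using ideal_in_add[OF J ideal_in_mult[OF J _ x(2)] ideal_in_mult[OF J _ y(2)]]
      is_subring_power[OF A s] by blast
  finally have "x + y \<in> colon A J (s ^ (r + q))"
    using x y A by (simp add: colon_def is_subring_def)
  then show "x + y \<in> saturation A J s"
    unfolding saturation_def by blast
next
  fix a x assume a: "a \<in> A" and "x \<in> saturation A J s"
  then obtain r where x: "x \<in> A" "s ^ r * x \<in> J"
    by (auto simp: saturation_def colon_def)
  have "s ^ r * (a * x) = a * (s ^ r * x)"
    by (simp add: ac_simps)
  also have "\<dots> \<in> J"
    using ideal_in_mult[OF J a x(2)] .
  finally have "a * x \<in> colon A J (s ^ r)"
    using x a A by (simp add: colon_def is_subring_def)
  then show "a * x \<in> saturation A J s"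
    unfolding saturation_def by blast
qed

lemma ideal_in_vimage:
  assumes A: "is_subring A" and K: "ideal_in B K" and hA: "h ` A \<subseteq> B"
    and add: "\<And>x y. h (x + y) = h x + h y" and mult: "\<And>x y. h (x * y) = h x * h y"
  shows "ideal_in A {x \<in> A. h x \<in> K}"
  unfolding ideal_in_def
proof (intro conjI ballI)
  have "h 0 = 0"
    using add[of 0 0] by simp
  then show "0 \<in> {x \<in> A. h x \<in> K}"
    using A ideal_in_zero[OF K] by (simp add: is_subring_def)
next
  fix x y assume "x \<in> {x \<in> A. h x \<in> K}" "y \<in> {x \<in> A. h x \<in> K}"
  then show "x + y \<in> {x \<in> A. h x \<in> K}"
    using A ideal_in_add[OF K] by (simp add: is_subring_def add)
next
  fix a x assume "a \<in> A" "x \<in> {x \<in> A. h x \<in> K}"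
  then show "a * x \<in> {x \<in> A. h x \<in> K}"
    using A hA ideal_in_mult[OF K] by (auto simp: is_subring_def mult)
qed blast

lemma ideal_pow_image_subset:
  assumes A: "is_subring A" and B: "is_subring B" and J: "J \<subseteq> A" and hA: "h ` A \<subseteq> B"
    and add: "\<And>x y. h (x + y) = h x + h y" and mult: "\<And>x y. h (x * y) = h x * h y"
    and one: "h 1 = 1"
  shows "h ` ideal_pow A J n \<subseteq> ideal_pow B (ideal_gen B (h ` J)) n"
proof -
  let ?K = "ideal_pow B (ideal_gen B (h ` J)) n"
  have hJ: "h ` J \<subseteq> B"
    using J hA by blast
  have "ideal_in B ?K"
    using ideal_in_ideal_pow[OF B ideal_in_subset[OF ideal_in_ideal_gen[OF B hJ]]] .
  then have "ideal_in A {x \<in> A. h x \<in> ?K}"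
    using ideal_in_vimage[where h = h and K = ?K, OF A _ hA add mult] by simp
  then have "ideal_pow A J n \<subseteq> {x \<in> A. h x \<in> ?K}"
  proof (rule ideal_pow_least)
    fix xs assume xs: "length xs = n" "set xs \<subseteq> J"
    have "h (prod_list xs) = prod_list (map h xs)"
      by (induction xs) (simp_all add: one mult)
    moreover have "prod_list (map h xs) \<in> ?K"
      using xs ideal_gen_superset[of "h ` J" B] by (intro prod_list_in_ideal_pow) auto
    moreover have "prod_list xs \<in> A"
      using xs J by (intro is_subring_prod_list[OF A]) auto
    ultimately show "prod_list xs \<in> {x \<in> A. h x \<in> ?K}"
      by simp
  qed
  then show ?thesis
    unfolding image_subset_iff by blast
qed

section \<open>Reindexing the monomials of a polynomial\<close>

definition map_monomials :: "('a \<Rightarrow> 'c) \<Rightarrow> ('a \<Rightarrow>\<^sub>0 'b::comm_monoid_add) \<Rightarrow> 'c \<Rightarrow>\<^sub>0 'b" where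
  "map_monomials \<kappa> F = (\<Sum>b\<in>Poly_Mapping.keys F. Poly_Mapping.single (\<kappa> b) (Poly_Mapping.lookup F b))"

lemma sum_single_keys: "(\<Sum>b\<in>Poly_Mapping.keys F. Poly_Mapping.single b (Poly_Mapping.lookup F b)) = F"
proof (rule poly_mapping_eqI)
  fix x
  show "Poly_Mapping.lookup (\<Sum>b\<in>Poly_Mapping.keys F. Poly_Mapping.single b (Poly_Mapping.lookup F b)) x
      = Poly_Mapping.lookup F x"
    by (simp add: lookup_sum lookup_single when_def in_keys_iff)
qed

lemma map_monomials_superset:
  assumes "finite A" "Poly_Mapping.keys F \<subseteq> A"
  shows "map_monomials \<kappa> F = (\<Sum>b\<in>A. Poly_Mapping.single (\<kappa> b) (Poly_Mapping.lookup F b))"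
  unfolding map_monomials_def
  by (rule sum.mono_neutral_left) (use assms in \<open>auto simp: in_keys_iff\<close>)

lemma map_monomials_add: "map_monomials \<kappa> (F + G) = map_monomials \<kappa> F + map_monomials \<kappa> G"
proof -
  let ?A = "Poly_Mapping.keys F \<union> Poly_Mapping.keys G"
  have "Poly_Mapping.keys (F + G) \<subseteq> ?A"
    by (rule keys_add)
  then show ?thesis
    by (simp add: map_monomials_superset[of ?A] lookup_add single_add sum.distrib)
qed

lemma map_monomials_zero [simp]: "map_monomials \<kappa> 0 = 0"
  by (simp add: map_monomials_def)

lemma map_monomials_sum: "map_monomials \<kappa> (sum f A) = (\<Sum>a\<in>A. map_monomials \<kappa> (f a))"
  by (induction A rule: infinite_finite_induct) (auto simp: map_monomials_add)

lemma map_monomials_single [simp]: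
  "map_monomials \<kappa> (Poly_Mapping.single b a) = Poly_Mapping.single (\<kappa> b) a"
  by (cases "a = 0") (auto simp: map_monomials_def)

lemma map_monomials_cong:
  "(\<And>b. b \<in> Poly_Mapping.keys F \<Longrightarrow> \<kappa> b = \<kappa>' b) \<Longrightarrow> map_monomials \<kappa> F = map_monomials \<kappa>' F"
  by (simp add: map_monomials_def)

lemma map_monomials_id: "map_monomials (\<lambda>b. b) F = F"
  by (simp add: map_monomials_def sum_single_keys)

lemma map_monomials_map_monomials:
  "map_monomials \<kappa>' (map_monomials \<kappa> F) = map_monomials (\<lambda>b. \<kappa>' (\<kappa> b)) F"
  by (simp add: map_monomials_def[of \<kappa>] map_monomials_sum) (simp add: map_monomials_def)

lemma keys_map_monomials: "Poly_Mapping.keys (map_monomials \<kappa> F) \<subseteq> \<kappa> ` Poly_Mapping.keys F"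
proof -
  have "Poly_Mapping.keys (map_monomials \<kappa> F)
      \<subseteq> (\<Union>b\<in>Poly_Mapping.keys F. Poly_Mapping.keys (Poly_Mapping.single (\<kappa> b) (Poly_Mapping.lookup F b)))"
    unfolding map_monomials_def by (rule keys_sum)
  then show ?thesis
    by (auto split: if_splits)
qed

lemma times_eq_sum_single:
  fixes F G :: "'a::monoid_add \<Rightarrow>\<^sub>0 'b::semiring_0"
  shows "F * G = (\<Sum>b\<in>Poly_Mapping.keys F. \<Sum>b'\<in>Poly_Mapping.keys G.
     Poly_Mapping.single (b + b') (Poly_Mapping.lookup F b * Poly_Mapping.lookup G b'))"
  by (subst (1 2) sum_single_keys[symmetric]) (simp add: sum_product mult_single)

lemma map_monomials_mult:
  fixes F G :: "'a::monoid_add \<Rightarrow>\<^sub>0 'b::semiring_0"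
  assumes "\<And>b b'. b \<in> Poly_Mapping.keys F \<Longrightarrow> b' \<in> Poly_Mapping.keys G \<Longrightarrow> \<kappa>\<^sub>1 b + \<kappa>\<^sub>2 b' = \<kappa> (b + b')"
  shows "map_monomials \<kappa>\<^sub>1 F * map_monomials \<kappa>\<^sub>2 G = map_monomials \<kappa> (F * G)"
proof -
  have "map_monomials \<kappa>\<^sub>1 F * map_monomials \<kappa>\<^sub>2 G = (\<Sum>b\<in>Poly_Mapping.keys F. \<Sum>b'\<in>Poly_Mapping.keys G.
     Poly_Mapping.single (\<kappa>\<^sub>1 b + \<kappa>\<^sub>2 b') (Poly_Mapping.lookup F b * Poly_Mapping.lookup G b'))"
    by (simp add: map_monomials_def sum_product mult_single)
  also have "\<dots> = (\<Sum>b\<in>Poly_Mapping.keys F. \<Sum>b'\<in>Poly_Mapping.keys G.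
     Poly_Mapping.single (\<kappa> (b + b')) (Poly_Mapping.lookup F b * Poly_Mapping.lookup G b'))"
    using assms by (intro sum.cong refl) simp
  also have "\<dots> = map_monomials \<kappa> (F * G)"
    unfolding times_eq_sum_single[of F G] by (simp add: map_monomials_sum)
  finally show ?thesis .
qed

lemma single_times_map_monomials:
  fixes F :: "'a \<Rightarrow>\<^sub>0 'b::semiring_1"
  shows "Poly_Mapping.single a 1 * map_monomials \<kappa> F = map_monomials (\<lambda>b. a + \<kappa> b) F"
  by (simp add: map_monomials_def sum_distrib_left mult_single)

lemma single_times_eq_sum_single:
  fixes F :: "'a::monoid_add \<Rightarrow>\<^sub>0 'b::semiring_0"
  shows "Poly_Mapping.single b \<alpha> * F
    = (\<Sum>b'\<in>Poly_Mapping.keys F. Poly_Mapping.single (b + b') (\<alpha> * Poly_Mapping.lookup F b'))"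
  by (subst sum_single_keys[symmetric]) (simp add: sum_distrib_left mult_single)

lemma lookup_times_zero:
  fixes F G :: "(nat \<Rightarrow>\<^sub>0 nat) \<Rightarrow>\<^sub>0 'b::semiring_0"
  shows "Poly_Mapping.lookup (F * G) 0 = Poly_Mapping.lookup F 0 * Poly_Mapping.lookup G 0"
proof -
  have sum_zero: "b + b' = 0 \<longleftrightarrow> b = 0 \<and> b' = 0" for b b' :: "nat \<Rightarrow>\<^sub>0 nat"
    by (auto simp: poly_mapping_eq_iff fun_eq_iff lookup_add)
  have "Poly_Mapping.lookup (F * G) 0 = (\<Sum>b\<in>Poly_Mapping.keys F. \<Sum>b'\<in>Poly_Mapping.keys G.
      (if b = 0 then Poly_Mapping.lookup F b else 0) * (if b' = 0 then Poly_Mapping.lookup G b' else 0))"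
    by (subst times_eq_sum_single) (auto simp: lookup_sum lookup_single when_def sum_zero intro!: sum.cong)
  also have "\<dots> = Poly_Mapping.lookup F 0 * Poly_Mapping.lookup G 0"
    by (simp add: sum_product[symmetric] in_keys_iff)
  finally show ?thesis .
qed

lemma polys_inD: "F \<in> polys_in V \<Longrightarrow> b \<in> Poly_Mapping.keys F \<Longrightarrow> Poly_Mapping.keys b \<subseteq> V"
  by (auto simp: polys_in_def)

lemma polys_in_single: "Poly_Mapping.keys b \<subseteq> V \<Longrightarrow> Poly_Mapping.single b a \<in> polys_in V"
  by (simp add: polys_in_def)

lemma polys_in_map_monomials:
  "(\<And>b. b \<in> Poly_Mapping.keys F \<Longrightarrow> Poly_Mapping.keys (\<kappa> b) \<subseteq> V) \<Longrightarrow> map_monomials \<kappa> F \<in> polys_in V"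
  unfolding polys_in_def using keys_map_monomials[of \<kappa> F] by blast

lemma polys_in_mono: "V \<subseteq> W \<Longrightarrow> polys_in V \<subseteq> polys_in W"
  unfolding polys_in_def by blast

lemma is_subring_polys_in: "is_subring (polys_in V :: 'k::field mpoly set)"
  unfolding is_subring_def
proof (intro conjI ballI)
  show "0 \<in> polys_in V" "1 \<in> polys_in V"
    by (simp_all add: polys_in_def)
  fix F G :: "'k mpoly" assume F: "F \<in> polys_in V" and G: "G \<in> polys_in V"
  show "F + G \<in> polys_in V"
    using F G keys_add[of F G] unfolding polys_in_def by blast
  show "F * G \<in> polys_in V"
    unfolding polys_in_def
  proof (intro CollectI ballI)
    fix b assume "b \<in> Poly_Mapping.keys (F * G)"
    then obtain a a' where "b = a + a'" "a \<in> Poly_Mapping.keys F" "a' \<in> Poly_Mapping.keys G"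
      using keys_mult[of F G] by blast
    then show "Poly_Mapping.keys b \<subseteq> V"
      using keys_add[of a a'] polys_inD[OF F] polys_inD[OF G] by blast
  qed
qed

lemma is_subring_Rring: "is_subring (Rring m :: 'k::field mpoly set)"
  unfolding Rring_def by (rule is_subring_polys_in)

lemma is_subring_Rtring: "is_subring (Rtring m :: 'k::field mpoly set)"
  unfolding Rtring_def by (rule is_subring_polys_in)

lemma zero_in_Rtring: "0 \<in> Rtring m"
  by (simp add: Rtring_def polys_in_def)

lemma one_in_Rtring: "1 \<in> Rtring m"
  by (simp add: Rtring_def polys_in_def)

lemma add_in_Rtring: "F \<in> Rtring m \<Longrightarrow> G \<in> Rtring m \<Longrightarrow> F + G \<in> Rtring m"
  using is_subring_Rtring by (auto simp: is_subring_def)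

lemma mult_in_Rtring: "F \<in> Rtring m \<Longrightarrow> G \<in> Rtring m \<Longrightarrow> F * G \<in> Rtring m"
  using is_subring_Rtring by (auto simp: is_subring_def)

lemma tvar_in_Rtring: "tvar m \<in> Rtring m"
  by (simp add: tvar_def Rtring_def polys_in_single)

lemma tvar_power: "tvar m ^ k = Poly_Mapping.single (Poly_Mapping.single m k) 1"
  by (induction k) (simp_all add: tvar_def mult_single single_add[symmetric])

lemma Rring_lookup_tvar: "g \<in> Rring m \<Longrightarrow> b \<in> Poly_Mapping.keys g \<Longrightarrow> Poly_Mapping.lookup b m = 0"
  by (fastforce simp: Rring_def polys_in_def in_keys_iff)

section \<open>Weighted grading, homogenization and dehomogenization\<close>

text \<open>The degree of a monomial for the grading of \<open>R[t]\<close> described above; every \<open>g\<^sup>*\<close> is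
  homogeneous of degree \<open>b(g)\<close>.\<close>

definition wdeg :: "nat \<Rightarrow> (nat \<Rightarrow> int) \<Rightarrow> (nat \<Rightarrow>\<^sub>0 nat) \<Rightarrow> int" where
  "wdeg m c b = wt m c b + int (Poly_Mapping.lookup b m)"

definition wcomp :: "nat \<Rightarrow> (nat \<Rightarrow> int) \<Rightarrow> int \<Rightarrow> 'k::field mpoly \<Rightarrow> 'k mpoly" where
  "wcomp m c d F = (\<Sum>b\<in>{b \<in> Poly_Mapping.keys F. wdeg m c b = d}. Poly_Mapping.single b (Poly_Mapping.lookup F b))"

definition wt_bounded :: "nat \<Rightarrow> (nat \<Rightarrow> int) \<Rightarrow> int \<Rightarrow> 'k::field mpoly \<Rightarrow> bool" where
  "wt_bounded m c N g \<longleftrightarrow> (\<forall>b\<in>Poly_Mapping.keys g. wt m c b \<le> N)"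

text \<open>If \<open>wt_bounded m c N g\<close>, this is \<open>t^N g(t^(-\<lambda>(x_1)) x_1, \<dots>, t^(-\<lambda>(x_m)) x_m)\<close>;
  so \<open>g\<^sup>*\<close> is the case \<open>N = b(g)\<close>.\<close>

definition homog :: "nat \<Rightarrow> (nat \<Rightarrow> int) \<Rightarrow> int \<Rightarrow> 'k::field mpoly \<Rightarrow> 'k mpoly" where
  "homog m c N = map_monomials (\<lambda>b. b + Poly_Mapping.single m (nat (N - wt m c b)))"

definition dehomog :: "nat \<Rightarrow> 'k::field mpoly \<Rightarrow> 'k mpoly" where
  "dehomog m = map_monomials (Poly_Mapping.update m 0)"

lemma wt_add: "wt m c (a + b) = wt m c a + wt m c b"
  by (simp add: wt_def lookup_add sum.distrib algebra_simps)

lemma wt_single_tvar: "wt m c (Poly_Mapping.single m k) = 0"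
  by (auto simp: wt_def lookup_single when_def intro!: sum.neutral)

lemma wt_update_tvar: "wt m c (Poly_Mapping.update m 0 b) = wt m c b"
  by (auto simp: wt_def lookup_update intro!: sum.cong)

lemma wdeg_add: "wdeg m c (a + b) = wdeg m c a + wdeg m c b"
  by (simp add: wdeg_def wt_add lookup_add)

lemma wdeg_single_tvar: "wdeg m c (Poly_Mapping.single m k) = int k"
  by (simp add: wdeg_def wt_single_tvar)

lemma lookup_wcomp:
  "Poly_Mapping.lookup (wcomp m c d F) b = (if wdeg m c b = d then Poly_Mapping.lookup F b else 0)"
  unfolding wcomp_def by (auto simp: lookup_sum lookup_single when_def in_keys_iff)

lemma keys_wcomp: "b \<in> Poly_Mapping.keys (wcomp m c d F) \<Longrightarrow> b \<in> Poly_Mapping.keys F \<and> wdeg m c b = d"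
  by (auto simp: in_keys_iff lookup_wcomp split: if_splits)

lemma wcomp_add: "wcomp m c d (F + G) = wcomp m c d F + wcomp m c d G"
  by (rule poly_mapping_eqI) (simp add: lookup_wcomp lookup_add)

lemma wcomp_zero [simp]: "wcomp m c d 0 = 0"
  by (simp add: wcomp_def)

lemma wcomp_sum: "wcomp m c d (sum f A) = (\<Sum>a\<in>A. wcomp m c d (f a))"
  by (induction A rule: infinite_finite_induct) (auto simp: wcomp_add)

lemma wcomp_single:
  "wcomp m c d (Poly_Mapping.single b a) = (if wdeg m c b = d then Poly_Mapping.single b a else 0)"
  by (rule poly_mapping_eqI) (simp add: lookup_wcomp lookup_single when_def)

lemma sum_wcomp: "(\<Sum>d\<in>wdeg m c ` Poly_Mapping.keys F. wcomp m c d F) = F"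
  by (rule poly_mapping_eqI) (auto simp: lookup_sum lookup_wcomp in_keys_iff)

lemma wcomp_single_times:
  "wcomp m c d (Poly_Mapping.single b \<alpha> * F) = Poly_Mapping.single b \<alpha> * wcomp m c (d - wdeg m c b) F"
proof -
  have "wcomp m c d (Poly_Mapping.single b \<alpha> * F) = (\<Sum>b'\<in>Poly_Mapping.keys F.
      if wdeg m c (b + b') = d then Poly_Mapping.single (b + b') (\<alpha> * Poly_Mapping.lookup F b') else 0)"
    by (simp add: single_times_eq_sum_single wcomp_sum wcomp_single)
  also have "\<dots> = (\<Sum>b'\<in>Poly_Mapping.keys F. Poly_Mapping.single b \<alpha> *
      wcomp m c (d - wdeg m c b) (Poly_Mapping.single b' (Poly_Mapping.lookup F b')))"
    by (intro sum.cong refl) (auto simp: wcomp_single wdeg_add mult_single)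
  also have "\<dots> = Poly_Mapping.single b \<alpha> * wcomp m c (d - wdeg m c b) F"
    by (simp add: sum_distrib_left[symmetric] wcomp_sum[symmetric] sum_single_keys)
  finally show ?thesis .
qed

lemma dehomog_add: "dehomog m (F + G) = dehomog m F + dehomog m G"
  by (simp add: dehomog_def map_monomials_add)

lemma dehomog_zero [simp]: "dehomog m 0 = 0"
  by (simp add: dehomog_def)

lemma dehomog_mult: "dehomog m (F * G) = dehomog m F * dehomog m G"
  unfolding dehomog_def
  by (rule map_monomials_mult[symmetric]) (simp add: poly_mapping_eq_iff fun_eq_iff lookup_update lookup_add)

lemma dehomog_tvar_power: "dehomog m (tvar m ^ k) = 1"
proof -
  have "Poly_Mapping.update m 0 (Poly_Mapping.single m k) = 0"
    by (rule poly_mapping_eqI) (simp add: lookup_update lookup_single when_def)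
  then show ?thesis
    by (simp add: dehomog_def tvar_power)
qed

lemma dehomog_in_Rring:
  assumes "F \<in> Rtring m"
  shows "dehomog m F \<in> Rring m"
  unfolding dehomog_def Rring_def
proof (rule polys_in_map_monomials)
  fix b assume "b \<in> Poly_Mapping.keys F"
  then have "Poly_Mapping.keys b \<subseteq> {..m}"
    using assms by (auto simp: Rtring_def polys_in_def)
  then show "Poly_Mapping.keys (Poly_Mapping.update m 0 b) \<subseteq> {..<m}"
    by (auto simp: keys_update)
qed

lemma homog_add: "homog m c N (F + G) = homog m c N F + homog m c N G"
  by (simp add: homog_def map_monomials_add)

lemma homog_zero [simp]: "homog m c N 0 = 0"
  by (simp add: homog_def)

lemma homog_one: "homog m c 0 1 = 1"
  by (simp add: homog_def wt_def flip: single_one)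

lemma wt_bounded_zero [simp]: "wt_bounded m c N 0"
  by (simp add: wt_bounded_def)

lemma wt_bounded_one: "wt_bounded m c 0 1"
  by (simp add: wt_bounded_def wt_def flip: single_one)

lemma wt_bounded_mono: "wt_bounded m c N g \<Longrightarrow> N \<le> N' \<Longrightarrow> wt_bounded m c N' g"
  unfolding wt_bounded_def by force

lemma wt_bounded_add: "wt_bounded m c N g \<Longrightarrow> wt_bounded m c N h \<Longrightarrow> wt_bounded m c N (g + h)"
  unfolding wt_bounded_def using keys_add[of g h] by blast

lemma wt_bounded_mult: "wt_bounded m c N g \<Longrightarrow> wt_bounded m c M h \<Longrightarrow> wt_bounded m c (N + M) (g * h)"
  unfolding wt_bounded_def using keys_mult[of g h] by (force simp: wt_add)

lemma wt_bounded_bmax: "wt_bounded m c (bmax m c g) g"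
  unfolding wt_bounded_def bmax_def by simp

lemma bmax_le: "g \<noteq> 0 \<Longrightarrow> wt_bounded m c N g \<Longrightarrow> bmax m c g \<le> N"
  unfolding bmax_def wt_bounded_def by simp

lemma gstar_eq_homog: "gstar m c g = homog m c (bmax m c g) g"
  by (simp add: gstar_def homog_def map_monomials_def)

lemma homog_mult:
  assumes "wt_bounded m c N g" "wt_bounded m c M h"
  shows "homog m c N g * homog m c M h = homog m c (N + M) (g * h)"
  unfolding homog_def
proof (rule map_monomials_mult)
  fix b b' assume "b \<in> Poly_Mapping.keys g" "b' \<in> Poly_Mapping.keys h"
  then have "wt m c b \<le> N" "wt m c b' \<le> M"
    using assms by (auto simp: wt_bounded_def)
  then have "nat (N - wt m c b) + nat (M - wt m c b') = nat (N + M - wt m c (b + b'))"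
    by (simp add: wt_add)
  then have "Poly_Mapping.single m (nat (N - wt m c b)) + Poly_Mapping.single m (nat (M - wt m c b'))
      = Poly_Mapping.single m (nat (N + M - wt m c (b + b')))"
    by (simp only: single_add[symmetric])
  then show "b + Poly_Mapping.single m (nat (N - wt m c b)) + (b' + Poly_Mapping.single m (nat (M - wt m c b')))
      = b + b' + Poly_Mapping.single m (nat (N + M - wt m c (b + b')))"
    by (simp add: ac_simps)
qed

lemma wt_bounded_prod_list:
  "(\<And>g. g \<in> set gs \<Longrightarrow> wt_bounded m c (\<beta> g) g) \<Longrightarrow> wt_bounded m c (\<Sum>g\<leftarrow>gs. \<beta> g) (prod_list gs)"
  by (induction gs) (simp_all add: wt_bounded_one wt_bounded_mult)

lemma homog_prod_list:
  assumes "\<And>g. g \<in> set gs \<Longrightarrow> wt_bounded m c (\<beta> g) g"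
  shows "homog m c (\<Sum>g\<leftarrow>gs. \<beta> g) (prod_list gs) = (\<Prod>g\<leftarrow>gs. homog m c (\<beta> g) g)"
  using assms
proof (induction gs)
  case Nil
  then show ?case by (simp add: homog_one)
next
  case (Cons g gs)
  have "wt_bounded m c (\<beta> g) g" "wt_bounded m c (\<Sum>g\<leftarrow>gs. \<beta> g) (prod_list gs)"
    using Cons.prems by (auto intro: wt_bounded_prod_list)
  then show ?case
    using Cons by (simp add: homog_mult[symmetric])
qed

lemma prod_list_gstar: "(\<Prod>g\<leftarrow>gs. gstar m c g) = homog m c (\<Sum>g\<leftarrow>gs. bmax m c g) (prod_list gs)"
  by (simp add: homog_prod_list wt_bounded_bmax gstar_eq_homog)

lemma homog_shift:
  assumes "wt_bounded m c N g"
  shows "homog m c (N + int k) g = tvar m ^ k * homog m c N g"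
  unfolding homog_def tvar_power single_times_map_monomials
proof (rule map_monomials_cong)
  fix b assume "b \<in> Poly_Mapping.keys g"
  then have "nat (N + int k - wt m c b) = k + nat (N - wt m c b)"
    using assms by (auto simp: wt_bounded_def)
  then show "b + Poly_Mapping.single m (nat (N + int k - wt m c b))
      = Poly_Mapping.single m k + (b + Poly_Mapping.single m (nat (N - wt m c b)))"
    by (simp add: single_add ac_simps)
qed

lemma homog_eq_tvar_power_gstar:
  assumes "wt_bounded m c N g"
  shows "homog m c N g = tvar m ^ nat (N - bmax m c g) * gstar m c g"
proof (cases "g = 0")
  case False
  then have "N = bmax m c g + int (nat (N - bmax m c g))"
    using bmax_le[OF _ assms] by simp
  then show ?thesis
    using homog_shift[OF wt_bounded_bmax, of m c g "nat (N - bmax m c g)"] gstar_eq_homog by metis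
qed (simp add: gstar_def)

lemma homog_in_Rtring:
  assumes "g \<in> Rring m"
  shows "homog m c N g \<in> Rtring m"
  unfolding homog_def Rtring_def
proof (rule polys_in_map_monomials)
  fix b assume "b \<in> Poly_Mapping.keys g"
  then have "Poly_Mapping.keys b \<subseteq> {..<m}"
    using assms by (auto simp: Rring_def polys_in_def)
  then show "Poly_Mapping.keys (b + Poly_Mapping.single m (nat (N - wt m c b))) \<subseteq> {..m}"
    using keys_add[of b "Poly_Mapping.single m (nat (N - wt m c b))"] by (auto split: if_splits)
qed

lemma gstar_in_Rtring: "g \<in> Rring m \<Longrightarrow> gstar m c g \<in> Rtring m"
  by (simp add: gstar_eq_homog homog_in_Rtring)

lemma dehomog_homog:
  assumes "g \<in> Rring m"
  shows "dehomog m (homog m c N g) = g"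
  unfolding homog_def dehomog_def map_monomials_map_monomials
proof (rule trans[OF map_monomials_cong map_monomials_id])
  fix b assume "b \<in> Poly_Mapping.keys g"
  then have "Poly_Mapping.lookup b m = 0"
    using Rring_lookup_tvar[OF assms] by blast
  then show "Poly_Mapping.update m 0 (b + Poly_Mapping.single m (nat (N - wt m c b))) = b"
    by (intro poly_mapping_eqI) (auto simp: lookup_update lookup_add lookup_single when_def)
qed

lemma wcomp_homog:
  assumes "g \<in> Rring m" "wt_bounded m c N g"
  shows "wcomp m c d (homog m c N g) = (if d = N then homog m c N g else 0)"
proof -
  have deg: "wdeg m c b' = N" if hb': "b' \<in> Poly_Mapping.keys (homog m c N g)" for b'
  proof -
    obtain b where b: "b \<in> Poly_Mapping.keys g" and b': "b' = b + Poly_Mapping.single m (nat (N - wt m c b))"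
      using subsetD[OF keys_map_monomials hb'[unfolded homog_def]] by (rule imageE)
    have "Poly_Mapping.lookup b m = 0" "wt m c b \<le> N"
      using Rring_lookup_tvar[OF assms(1) b] assms(2) b unfolding wt_bounded_def by blast+
    moreover have "wdeg m c b' = wdeg m c b + int (nat (N - wt m c b))"
      by (simp add: b' wdeg_add wdeg_single_tvar)
    ultimately show ?thesis
      by (simp add: wdeg_def)
  qed
  show ?thesis
  proof (rule poly_mapping_eqI)
    fix b'
    show "Poly_Mapping.lookup (wcomp m c d (homog m c N g)) b'
        = Poly_Mapping.lookup (if d = N then homog m c N g else 0) b'"
      using deg[of b'] by (cases "b' \<in> Poly_Mapping.keys (homog m c N g)") (simp_all add: lookup_wcomp in_keys_iff)
  qed
qed

lemma wt_bounded_dehomog_wcomp: "wt_bounded m c d (dehomog m (wcomp m c d F))"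
  unfolding wt_bounded_def
proof
  fix x assume hx: "x \<in> Poly_Mapping.keys (dehomog m (wcomp m c d F))"
  obtain b where b: "b \<in> Poly_Mapping.keys (wcomp m c d F)" and x: "x = Poly_Mapping.update m 0 b"
    using subsetD[OF keys_map_monomials hx[unfolded dehomog_def]] by (rule imageE)
  have "wdeg m c b = d"
    using keys_wcomp[OF b] by blast
  then show "wt m c x \<le> d"
    by (simp add: x wdeg_def wt_update_tvar)
qed

lemma homog_dehomog_wcomp: "homog m c d (dehomog m (wcomp m c d F)) = wcomp m c d F"
  unfolding homog_def dehomog_def map_monomials_map_monomials
proof (rule trans[OF map_monomials_cong map_monomials_id])
  fix b assume "b \<in> Poly_Mapping.keys (wcomp m c d F)"
  then have "wdeg m c b = d"
    using keys_wcomp by blast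
  then have "nat (d - wt m c (Poly_Mapping.update m 0 b)) = Poly_Mapping.lookup b m"
    by (auto simp: wdeg_def wt_update_tvar)
  then show "Poly_Mapping.update m 0 b + Poly_Mapping.single m (nat (d - wt m c (Poly_Mapping.update m 0 b))) = b"
    by (intro poly_mapping_eqI) (auto simp: lookup_add lookup_update lookup_single when_def)
qed

section \<open>The ideal \<open>L\<^sup>*\<close> and its saturation with respect to \<open>t\<close>\<close>

lemma ideal_in_Lstar: "L \<subseteq> Rring m \<Longrightarrow> ideal_in (Rtring m) (Lstar m c L)"
  unfolding Lstar_def by (rule ideal_in_ideal_gen[OF is_subring_Rtring]) (auto intro: gstar_in_Rtring)

lemma gstar_in_Lstar:
  assumes "L \<subseteq> Rring m" "g \<in> L"
  shows "gstar m c g \<in> Lstar m c L"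
proof (cases "g = 0")
  case True
  then show ?thesis
    using ideal_in_zero[OF ideal_in_Lstar[OF assms(1)]] by (simp add: gstar_def)
next
  case False
  then show ?thesis
    unfolding Lstar_def using assms(2) by (intro subsetD[OF ideal_gen_superset]) simp
qed

lemma homog_in_Lstar:
  assumes "L \<subseteq> Rring m" "g \<in> L" "wt_bounded m c N g"
  shows "homog m c N g \<in> Lstar m c L"
  unfolding homog_eq_tvar_power_gstar[OF assms(3)]
  by (intro ideal_in_mult[OF ideal_in_Lstar[OF assms(1)]] is_subring_power[OF is_subring_Rtring]
      tvar_in_Rtring gstar_in_Lstar assms(1,2))

definition dehomog_comps_in :: "nat \<Rightarrow> (nat \<Rightarrow> int) \<Rightarrow> 'k::field mpoly set \<Rightarrow> 'k mpoly set" where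
  "dehomog_comps_in m c L = {F \<in> Rtring m. \<forall>d. dehomog m (wcomp m c d F) \<in> L}"

context
  fixes m :: nat and c :: "nat \<Rightarrow> int" and L :: "'k::field mpoly set"
  assumes L: "ideal_in (Rring m) L"
begin

lemma zero_in_dehomog_comps_in: "0 \<in> dehomog_comps_in m c L"
  using ideal_in_zero[OF L] ideal_in_zero[OF ideal_in_carrier[OF is_subring_Rtring]]
  by (simp add: dehomog_comps_in_def)

lemma add_in_dehomog_comps_in:
  "F \<in> dehomog_comps_in m c L \<Longrightarrow> G \<in> dehomog_comps_in m c L \<Longrightarrow> F + G \<in> dehomog_comps_in m c L"
  using ideal_in_add[OF L] by (simp add: dehomog_comps_in_def add_in_Rtring wcomp_add dehomog_add)

lemma single_times_in_dehomog_comps_in: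
  assumes F: "F \<in> dehomog_comps_in m c L" and b: "Poly_Mapping.keys b \<subseteq> {..m}"
  shows "Poly_Mapping.single b \<alpha> * F \<in> dehomog_comps_in m c L"
proof -
  have single: "Poly_Mapping.single b \<alpha> \<in> Rtring m"
    using b by (simp add: Rtring_def polys_in_single)
  have "dehomog m (wcomp m c d (Poly_Mapping.single b \<alpha> * F)) \<in> L" for d
  proof -
    have "dehomog m (wcomp m c d (Poly_Mapping.single b \<alpha> * F))
        = dehomog m (Poly_Mapping.single b \<alpha>) * dehomog m (wcomp m c (d - wdeg m c b) F)"
      by (simp add: wcomp_single_times dehomog_mult)
    also have "\<dots> \<in> L"
      using F by (intro ideal_in_mult[OF L] dehomog_in_Rring[OF single]) (simp add: dehomog_comps_in_def)
    finally show ?thesis .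
  qed
  moreover have "Poly_Mapping.single b \<alpha> * F \<in> Rtring m"
    using single F by (simp add: dehomog_comps_in_def mult_in_Rtring)
  ultimately show ?thesis
    by (simp add: dehomog_comps_in_def)
qed

lemma ideal_in_dehomog_comps_in: "ideal_in (Rtring m) (dehomog_comps_in m c L)"
  unfolding ideal_in_def
proof (intro conjI ballI zero_in_dehomog_comps_in add_in_dehomog_comps_in)
  show "dehomog_comps_in m c L \<subseteq> Rtring m"
    by (auto simp: dehomog_comps_in_def)
next
  fix a F :: "'k mpoly" assume a: "a \<in> Rtring m" and F: "F \<in> dehomog_comps_in m c L"
  have "(\<Sum>b\<in>S. Poly_Mapping.single b (Poly_Mapping.lookup a b) * F) \<in> dehomog_comps_in m c L"
    if "S \<subseteq> Poly_Mapping.keys a" for S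
    using finite_subset[OF that finite_keys] that
  proof (induction S rule: finite_induct)
    case (insert b S)
    have "Poly_Mapping.keys b \<subseteq> {..m}"
      using insert.prems a by (auto simp: Rtring_def polys_in_def)
    then show ?case
      using insert by (simp add: add_in_dehomog_comps_in single_times_in_dehomog_comps_in[OF F])
  qed (simp add: zero_in_dehomog_comps_in)
  from this[of "Poly_Mapping.keys a"] show "a * F \<in> dehomog_comps_in m c L"
    by (simp add: sum_distrib_right[symmetric] sum_single_keys)
qed

lemma Lstar_eq_dehomog_comps_in: "Lstar m c L = dehomog_comps_in m c L"
proof
  have LR: "L \<subseteq> Rring m"
    using L by (rule ideal_in_subset)
  show "Lstar m c L \<subseteq> dehomog_comps_in m c L"
    unfolding Lstar_def
  proof (rule ideal_gen_least[OF ideal_in_dehomog_comps_in], rule image_subsetI)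
    fix g assume "g \<in> L - {0}"
    then have g: "g \<in> L"
      by simp
    then have gR: "g \<in> Rring m"
      using LR by blast
    have "dehomog m (wcomp m c d (gstar m c g)) \<in> L" for d
      using g ideal_in_zero[OF L]
      by (simp add: gstar_eq_homog wcomp_homog[OF gR wt_bounded_bmax] dehomog_homog[OF gR])
    then show "gstar m c g \<in> dehomog_comps_in m c L"
      using gstar_in_Rtring[OF gR] by (simp add: dehomog_comps_in_def)
  qed
  show "dehomog_comps_in m c L \<subseteq> Lstar m c L"
  proof
    fix F assume F: "F \<in> dehomog_comps_in m c L"
    have "wcomp m c d F \<in> Lstar m c L" for d
      using homog_in_Lstar[OF LR _ wt_bounded_dehomog_wcomp] F
      by (simp add: dehomog_comps_in_def homog_dehomog_wcomp)
    then have "(\<Sum>d\<in>wdeg m c ` Poly_Mapping.keys F. wcomp m c d F) \<in> Lstar m c L"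
      by (intro ideal_in_sum[OF ideal_in_Lstar[OF LR]])
    then show "F \<in> Lstar m c L"
      by (simp add: sum_wcomp)
  qed
qed

lemma Lstar_tvar_saturated:
  assumes F: "F \<in> Rtring m" and tF: "tvar m ^ r * F \<in> Lstar m c L"
  shows "F \<in> Lstar m c L"
proof -
  have "dehomog m (wcomp m c d F) = dehomog m (wcomp m c (d + int r) (tvar m ^ r * F))" for d
    by (simp add: tvar_power wcomp_single_times wdeg_single_tvar dehomog_mult
        dehomog_tvar_power[unfolded tvar_power])
  then show ?thesis
    using tF F by (simp add: Lstar_eq_dehomog_comps_in dehomog_comps_in_def)
qed

end

section \<open>Extension to the local ring \<open>S\<close>\<close>

lemma one_in_Uset: "1 \<in> Uset m"
  by (simp add: Uset_def is_subring_polys_in[unfolded is_subring_def])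

lemma Uset_nonzero: "u \<in> Uset m \<Longrightarrow> u \<noteq> 0"
  by (auto simp: Uset_def)

lemma Uset_subset_Rtring: "Uset m \<subseteq> Rtring m"
  unfolding Uset_def Rtring_def using polys_in_mono[of "{m}" "{..m}"] by auto

lemma mult_in_Uset: "u \<in> Uset m \<Longrightarrow> v \<in> Uset m \<Longrightarrow> u * v \<in> Uset m"
  by (simp add: Uset_def is_subring_polys_in[unfolded is_subring_def] lookup_times_zero)

lemma Fract_in_Sring: "F \<in> Rtring m \<Longrightarrow> u \<in> Uset m \<Longrightarrow> Fract F u \<in> Sring m"
  by (auto simp: Sring_def)

lemma SringE:
  assumes "a \<in> Sring m"
  obtains F u where "a = Fract F u" "F \<in> Rtring m" "u \<in> Uset m"
  using assms by (auto simp: Sring_def)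

lemma is_subring_Sring: "is_subring (Sring m :: 'k::field mpoly fract set)"
  unfolding is_subring_def
proof (intro conjI ballI)
  show "0 \<in> (Sring m :: 'k mpoly fract set)" "1 \<in> (Sring m :: 'k mpoly fract set)"
    using Fract_in_Sring[OF zero_in_Rtring one_in_Uset] Fract_in_Sring[OF one_in_Rtring one_in_Uset]
    by (simp_all add: fract_collapse)
  fix a b :: "'k mpoly fract" assume "a \<in> Sring m" "b \<in> Sring m"
  then obtain F u G v where a: "a = Fract F u" "F \<in> Rtring m" "u \<in> Uset m"
    and b: "b = Fract G v" "G \<in> Rtring m" "v \<in> Uset m"
    by (metis SringE)
  have uv: "u * v \<in> Uset m" "u \<in> Rtring m" "v \<in> Rtring m" "u \<noteq> 0" "v \<noteq> 0"
    using mult_in_Uset[OF a(3) b(3)] subsetD[OF Uset_subset_Rtring a(3)] subsetD[OF Uset_subset_Rtring b(3)]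
      Uset_nonzero[OF a(3)] Uset_nonzero[OF b(3)] by blast+
  show "a + b \<in> Sring m"
    using a b uv by (simp add: Fract_in_Sring add_in_Rtring mult_in_Rtring)
  show "a * b \<in> Sring m"
    using a b uv by (simp add: Fract_in_Sring mult_in_Rtring)
qed

lemma emb_in_Sring: "F \<in> Rtring m \<Longrightarrow> emb F \<in> Sring m"
  unfolding emb_def by (rule Fract_in_Sring[OF _ one_in_Uset])

lemma emb_add: "emb (F + G) = emb F + emb G"
  by (simp add: emb_def)

lemma emb_mult: "emb (F * G) = emb F * emb G"
  by (simp add: emb_def)

lemma emb_one: "emb 1 = 1"
  by (simp add: emb_def fract_collapse)

lemma emb_power: "emb (F ^ r) = emb F ^ r"
  by (induction r) (simp_all add: emb_one emb_mult)

lemma emb_prod_list: "emb (prod_list Fs) = (\<Prod>F\<leftarrow>Fs. emb F)"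
  by (induction Fs) (simp_all add: emb_one emb_mult)

lemma ideal_in_fractions:
  fixes J :: "'k::field mpoly set"
  assumes J: "ideal_in (Rtring m) J"
  shows "ideal_in (Sring m) {Fract F u | F u. F \<in> J \<and> u \<in> Uset m}"
    (is "ideal_in _ ?C")
  unfolding ideal_in_def
proof (intro conjI ballI)
  show "?C \<subseteq> Sring m"
    using ideal_in_subset[OF J] Fract_in_Sring by blast
  have "Fract 0 1 \<in> ?C"
    using ideal_in_zero[OF J] one_in_Uset by blast
  then show "0 \<in> ?C"
    by (simp add: fract_collapse)
next
  fix a b assume "a \<in> ?C" "b \<in> ?C"
  then obtain F u G v where a: "a = Fract F u" "F \<in> J" "u \<in> Uset m"
    and b: "b = Fract G v" "G \<in> J" "v \<in> Uset m"
    by blast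
  have "F * v + G * u \<in> J"
    using ideal_in_add[OF J ideal_in_mult_right[OF J _ a(2)] ideal_in_mult_right[OF J _ b(2)]]
      subsetD[OF Uset_subset_Rtring a(3)] subsetD[OF Uset_subset_Rtring b(3)] by blast
  moreover have "a + b = Fract (F * v + G * u) (u * v)"
    using a b Uset_nonzero[OF a(3)] Uset_nonzero[OF b(3)] by simp
  ultimately show "a + b \<in> ?C"
    using mult_in_Uset[OF a(3) b(3)] by blast
next
  fix a b :: "'k mpoly fract" assume "a \<in> Sring m" "b \<in> ?C"
  obtain f w where a: "a = Fract f w" "f \<in> Rtring m" "w \<in> Uset m"
    using \<open>a \<in> Sring m\<close> by (rule SringE)
  obtain F u where b: "b = Fract F u" "F \<in> J" "u \<in> Uset m"
    using \<open>b \<in> ?C\<close> by blast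
  have "f * F \<in> J"
    using ideal_in_mult[OF J a(2) b(2)] .
  moreover have "a * b = Fract (f * F) (w * u)"
    using a b by simp
  ultimately show "a * b \<in> ?C"
    using mult_in_Uset[OF a(3) b(3)] by blast
qed

lemma ideal_gen_emb_eq:
  fixes J :: "'k::field mpoly set"
  assumes J: "ideal_in (Rtring m) J"
  shows "ideal_gen (Sring m) (emb ` J) = {Fract F u | F u. F \<in> J \<and> u \<in> Uset m}"
    (is "_ = ?C")
proof
  have "emb ` J \<subseteq> ?C"
    using one_in_Uset unfolding emb_def by blast
  then show "ideal_gen (Sring m) (emb ` J) \<subseteq> ?C"
    by (rule ideal_gen_least[OF ideal_in_fractions[OF J]])
  have "emb ` J \<subseteq> Sring m"
    using ideal_in_subset[OF J] emb_in_Sring by auto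
  then have ideal: "ideal_in (Sring m) (ideal_gen (Sring m) (emb ` J))"
    by (rule ideal_in_ideal_gen[OF is_subring_Sring])
  show "?C \<subseteq> ideal_gen (Sring m) (emb ` J)"
  proof
    fix a assume "a \<in> ?C"
    then obtain F u where a: "a = Fract F u" "F \<in> J" "u \<in> Uset m"
      by blast
    have "emb F \<in> ideal_gen (Sring m) (emb ` J)"
      using a(2) by (intro subsetD[OF ideal_gen_superset]) simp
    then have "Fract 1 u * emb F \<in> ideal_gen (Sring m) (emb ` J)"
      by (rule ideal_in_mult[OF ideal Fract_in_Sring[OF one_in_Rtring a(3)]])
    then show "a \<in> ideal_gen (Sring m) (emb ` J)"
      using a(1) by (simp add: emb_def)
  qed
qed

lemma ideal_gen_emb_tvar_saturated:
  assumes J: "ideal_in (Rtring m) J"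
    and sat: "\<And>F r. F \<in> Rtring m \<Longrightarrow> tvar m ^ r * F \<in> J \<Longrightarrow> F \<in> J"
    and a: "a \<in> Sring m" and ta: "emb (tvar m) ^ r * a \<in> ideal_gen (Sring m) (emb ` J)"
  shows "a \<in> ideal_gen (Sring m) (emb ` J)"
proof -
  obtain f w where f: "a = Fract f w" "f \<in> Rtring m" "w \<in> Uset m"
    using a by (rule SringE)
  obtain F u where F: "emb (tvar m) ^ r * a = Fract F u" "F \<in> J" "u \<in> Uset m"
    using ta unfolding ideal_gen_emb_eq[OF J] by blast
  have "Fract (tvar m ^ r * f) w = emb (tvar m ^ r) * a"
    unfolding f(1) by (simp add: emb_def)
  then have "Fract (tvar m ^ r * f) w = Fract F u"
    using F(1) by (simp add: emb_power)
  then have "tvar m ^ r * (f * u) = F * w"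
    using Uset_nonzero[OF f(3)] Uset_nonzero[OF F(3)] by (simp add: eq_fract ac_simps)
  also have "\<dots> \<in> J"
    using ideal_in_mult_right[OF J subsetD[OF Uset_subset_Rtring f(3)] F(2)] .
  finally have "f * u \<in> J"
    using sat mult_in_Rtring[OF f(2) subsetD[OF Uset_subset_Rtring F(3)]] by blast
  moreover have "a = Fract (f * u) (w * u)"
    using f(1) mult_fract_cancel[OF Uset_nonzero[OF F(3)], of f w] by (simp add: ac_simps)
  ultimately show ?thesis
    unfolding ideal_gen_emb_eq[OF J] using mult_in_Uset[OF f(3) F(3)] by blast
qed

lemma ideal_in_Ltilde:
  assumes "L \<subseteq> Rring m"
  shows "ideal_in (Sring m) (Ltilde m c L)"
  unfolding Ltilde_def
proof (rule ideal_in_ideal_gen[OF is_subring_Sring])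
  show "emb ` Lstar m c L \<subseteq> Sring m"
    using ideal_in_subset[OF ideal_in_Lstar[OF assms]] by (auto intro: emb_in_Sring)
qed

lemma Ltilde_tvar_saturated:
  assumes L: "ideal_in (Rring m) L" and a: "a \<in> Sring m" and ta: "emb (tvar m) ^ r * a \<in> Ltilde m c L"
  shows "a \<in> Ltilde m c L"
  unfolding Ltilde_def
proof (rule ideal_gen_emb_tvar_saturated[OF ideal_in_Lstar[OF ideal_in_subset[OF L]] _ a])
  show "F \<in> Lstar m c L" if "F \<in> Rtring m" "tvar m ^ k * F \<in> Lstar m c L" for F k
    using Lstar_tvar_saturated[OF L that] .
  show "emb (tvar m) ^ r * a \<in> ideal_gen (Sring m) (emb ` Lstar m c L)"
    using ta unfolding Ltilde_def .
qed

lemma set_subset_imageE: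
  assumes "set ys \<subseteq> f ` A"
  obtains xs where "ys = map f xs" "set xs \<subseteq> A"
proof -
  have "ys \<in> lists (f ` A)"
    using assms by (simp add: lists_eq_set)
  then have "ys \<in> map f ` lists A"
    by (simp only: lists_image)
  then show ?thesis
    using that by (auto simp: lists_eq_set)
qed

lemma homog_in_ideal_mono:
  assumes J: "ideal_in (Rtring m) J" and g: "wt_bounded m c N g" "homog m c N g \<in> J" and N: "N \<le> N'"
  shows "homog m c N' g \<in> J"
proof -
  have "homog m c N' g = tvar m ^ nat (N' - N) * homog m c N g"
    using homog_shift[OF g(1), of "nat (N' - N)"] N by simp
  then show ?thesis
    using ideal_in_mult[OF J is_subring_power[OF is_subring_Rtring tvar_in_Rtring] g(2)] by simp
qed

lemma ideal_in_homog_vimage: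
  fixes J :: "'k::field mpoly set"
  assumes J: "ideal_in (Rtring m) J"
  shows "ideal_in (Rring m) {g \<in> Rring m. \<exists>N. wt_bounded m c N g \<and> homog m c N g \<in> J}"
    (is "ideal_in _ ?H")
  unfolding ideal_in_def
proof (intro conjI ballI)
  show "?H \<subseteq> Rring m"
    by blast
  show "0 \<in> ?H"
    using ideal_in_zero[OF J] is_subring_Rring by (fastforce simp: is_subring_def)
next
  fix g h :: "'k mpoly" assume "g \<in> ?H" "h \<in> ?H"
  then obtain N M where g: "g \<in> Rring m" "wt_bounded m c N g" "homog m c N g \<in> J"
    and h: "h \<in> Rring m" "wt_bounded m c M h" "homog m c M h \<in> J"
    by blast
  let ?K = "max N M"
  have "wt_bounded m c ?K g" "wt_bounded m c ?K h"
    using g(2) h(2) by (auto intro: wt_bounded_mono)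
  moreover have "homog m c ?K g \<in> J" "homog m c ?K h \<in> J"
    using homog_in_ideal_mono[OF J g(2,3)] homog_in_ideal_mono[OF J h(2,3)] by simp_all
  moreover have "g + h \<in> Rring m"
    using g(1) h(1) is_subring_Rring by (fastforce simp: is_subring_def)
  ultimately show "g + h \<in> ?H"
    by (auto simp: homog_add intro: wt_bounded_add ideal_in_add[OF J])
next
  fix a g :: "'k mpoly" assume a: "a \<in> Rring m" and "g \<in> ?H"
  then obtain N where g: "g \<in> Rring m" "wt_bounded m c N g" "homog m c N g \<in> J"
    by blast
  have "homog m c (bmax m c a + N) (a * g) = homog m c (bmax m c a) a * homog m c N g"
    using homog_mult[OF wt_bounded_bmax g(2)] by simp
  also have "\<dots> \<in> J"
    using ideal_in_mult[OF J homog_in_Rtring[OF a] g(3)] .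
  finally have "homog m c (bmax m c a + N) (a * g) \<in> J" .
  moreover have "wt_bounded m c (bmax m c a + N) (a * g)"
    using wt_bounded_mult[OF wt_bounded_bmax g(2)] .
  moreover have "a * g \<in> Rring m"
    using a g(1) is_subring_Rring by (fastforce simp: is_subring_def)
  ultimately show "a * g \<in> ?H"
    by blast
qed

lemma tvar_power_gstar_in_Lstar_pow:
  assumes I: "ideal_in (Rring m) I" and g: "g \<in> ideal_pow (Rring m) I n"
  obtains r where "tvar m ^ r * gstar m c g \<in> ideal_pow (Rtring m) (Lstar m c I) n"
proof -
  let ?J = "ideal_pow (Rtring m) (Lstar m c I) n"
  have IR: "I \<subseteq> Rring m"
    using I by (rule ideal_in_subset)
  have "ideal_in (Rtring m) ?J"
    using ideal_in_ideal_pow[OF is_subring_Rtring ideal_in_subset[OF ideal_in_Lstar[OF IR]]] .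
  then have "ideal_pow (Rring m) I n \<subseteq> {g \<in> Rring m. \<exists>N. wt_bounded m c N g \<and> homog m c N g \<in> ?J}"
  proof (rule ideal_pow_least[OF ideal_in_homog_vimage])
    fix gs assume gs: "length gs = n" "set gs \<subseteq> I"
    have "homog m c (\<Sum>g\<leftarrow>gs. bmax m c g) (prod_list gs) \<in> ?J"
      unfolding prod_list_gstar[symmetric]
      using gs gstar_in_Lstar[OF IR] by (intro prod_list_in_ideal_pow) auto
    moreover have "wt_bounded m c (\<Sum>g\<leftarrow>gs. bmax m c g) (prod_list gs)"
      by (rule wt_bounded_prod_list[OF wt_bounded_bmax])
    moreover have "prod_list gs \<in> Rring m"
      using gs IR by (intro is_subring_prod_list[OF is_subring_Rring]) auto
    ultimately show "prod_list gs \<in> {g \<in> Rring m. \<exists>N. wt_bounded m c N g \<and> homog m c N g \<in> ?J}"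
      by blast
  qed
  then obtain N where "wt_bounded m c N g" "homog m c N g \<in> ?J"
    using g by blast
  then show ?thesis
    using that homog_eq_tvar_power_gstar by metis
qed

lemma Lstar_pow_subset:
  assumes I: "ideal_in (Rring m) I"
  shows "ideal_pow (Rtring m) (Lstar m c I) n \<subseteq> Lstar m c (ideal_pow (Rring m) I n)"
proof -
  have IR: "I \<subseteq> Rring m"
    using I by (rule ideal_in_subset)
  have InR: "ideal_pow (Rring m) I n \<subseteq> Rring m"
    using ideal_in_subset[OF ideal_in_ideal_pow[OF is_subring_Rring IR]] .
  show ?thesis
    unfolding Lstar_def[of m c I]
  proof (rule ideal_pow_ideal_gen_least[OF is_subring_Rtring _ ideal_in_Lstar[OF InR]])
    show "gstar m c ` (I - {0}) \<subseteq> Rtring m"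
      using IR gstar_in_Rtring by blast
  next
    fix ys assume ys: "length ys = n" "set ys \<subseteq> gstar m c ` (I - {0})"
    obtain gs where gs: "ys = map (gstar m c) gs" "set gs \<subseteq> I - {0}"
      using ys(2) by (rule set_subset_imageE)
    have "homog m c (\<Sum>g\<leftarrow>gs. bmax m c g) (prod_list gs) \<in> Lstar m c (ideal_pow (Rring m) I n)"
      using gs ys(1)
      by (intro homog_in_Lstar[OF InR] prod_list_in_ideal_pow wt_bounded_prod_list[OF wt_bounded_bmax]) auto
    then show "prod_list ys \<in> Lstar m c (ideal_pow (Rring m) I n)"
      by (simp add: gs(1) prod_list_gstar)
  qed
qed

lemma Ltilde_pow_subset:
  assumes I: "ideal_in (Rring m) I"
  shows "ideal_pow (Sring m) (Ltilde m c I) n \<subseteq> Ltilde m c (ideal_pow (Rring m) I n)"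
proof -
  have IR: "I \<subseteq> Rring m"
    using I by (rule ideal_in_subset)
  have InR: "ideal_pow (Rring m) I n \<subseteq> Rring m"
    using ideal_in_subset[OF ideal_in_ideal_pow[OF is_subring_Rring IR]] .
  show ?thesis
    unfolding Ltilde_def[of m c I]
  proof (rule ideal_pow_ideal_gen_least[OF is_subring_Sring _ ideal_in_Ltilde[OF InR]])
    show "emb ` Lstar m c I \<subseteq> Sring m"
      using ideal_in_subset[OF ideal_in_Lstar[OF IR]] by (auto intro: emb_in_Sring)
  next
    fix ys assume ys: "length ys = n" "set ys \<subseteq> emb ` Lstar m c I"
    obtain Fs where Fs: "ys = map emb Fs" "set Fs \<subseteq> Lstar m c I"
      using ys(2) by (rule set_subset_imageE)
    have "prod_list Fs \<in> ideal_pow (Rtring m) (Lstar m c I) n"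
      using Fs ys(1) by (intro prod_list_in_ideal_pow) simp_all
    then have "prod_list Fs \<in> Lstar m c (ideal_pow (Rring m) I n)"
      using Lstar_pow_subset[OF I] by blast
    then show "prod_list ys \<in> Ltilde m c (ideal_pow (Rring m) I n)"
      unfolding Ltilde_def Fs(1) emb_prod_list[symmetric]
      by (intro subsetD[OF ideal_gen_superset] imageI)
  qed
qed

lemma Ltilde_subset_saturation:
  assumes I: "ideal_in (Rring m) I"
  shows "Ltilde m c (ideal_pow (Rring m) I n)
    \<subseteq> saturation (Sring m) (ideal_pow (Sring m) (Ltilde m c I) n) (emb (tvar m))"
proof -
  let ?P = "ideal_pow (Sring m) (Ltilde m c I) n"
  let ?sat = "saturation (Sring m) ?P (emb (tvar m))"
  have IR: "I \<subseteq> Rring m"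
    using I by (rule ideal_in_subset)
  have sat: "ideal_in (Sring m) ?sat"
    using ideal_in_saturation[OF is_subring_Sring
        ideal_in_ideal_pow[OF is_subring_Sring ideal_in_subset[OF ideal_in_Ltilde[OF IR]]]
        emb_in_Sring[OF tvar_in_Rtring]] .
  have emb_Rtring: "emb ` Rtring m \<subseteq> Sring m"
    using emb_in_Sring by blast
  have emb_pow: "emb ` ideal_pow (Rtring m) (Lstar m c I) n \<subseteq> ?P"
    unfolding Ltilde_def
    by (rule ideal_pow_image_subset[OF is_subring_Rtring is_subring_Sring
          ideal_in_subset[OF ideal_in_Lstar[OF IR]] emb_Rtring emb_add emb_mult emb_one])
  have "Lstar m c (ideal_pow (Rring m) I n) \<subseteq> {F \<in> Rtring m. emb F \<in> ?sat}"
    unfolding Lstar_def[of m c "ideal_pow (Rring m) I n"]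
  proof (rule ideal_gen_least[OF ideal_in_vimage[OF is_subring_Rtring sat emb_Rtring emb_add emb_mult]],
      rule image_subsetI)
    fix g assume "g \<in> ideal_pow (Rring m) I n - {0}"
    then obtain r where r: "tvar m ^ r * gstar m c g \<in> ideal_pow (Rtring m) (Lstar m c I) n"
      using tvar_power_gstar_in_Lstar_pow[OF I] by blast
    have "emb (tvar m) ^ r * emb (gstar m c g) \<in> ?P"
      using subsetD[OF emb_pow imageI[OF r]] by (simp add: emb_mult emb_power)
    moreover have "gstar m c g \<in> Rtring m"
      using \<open>g \<in> ideal_pow (Rring m) I n - {0}\<close> ideal_in_subset[OF ideal_in_ideal_pow[OF is_subring_Rring IR]]
      by (blast intro: gstar_in_Rtring)
    ultimately show "gstar m c g \<in> {F \<in> Rtring m. emb F \<in> ?sat}"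
      using emb_in_Sring by (auto simp: saturation_def colon_def)
  qed
  then show ?thesis
    unfolding Ltilde_def[of m c "ideal_pow (Rring m) I n"] by (intro ideal_gen_least[OF sat]) blast
qed

theorem lemma3p7:
  fixes m :: nat and c :: "nat \<Rightarrow> int" and I :: "'k::field mpoly set" and n :: nat
  assumes "homogeneous_ideal m I"
  shows "Ltilde m c (ideal_pow (Rring m) I n)
           = saturation (Sring m) (ideal_pow (Sring m) (Ltilde m c I) n) (emb (tvar m))"
    (is "?L = ?R")
proof
  have I: "ideal_in (Rring m) I"
    using assms by (simp add: homogeneous_ideal_def)
  then show "?L \<subseteq> ?R"
    by (rule Ltilde_subset_saturation)
  have In: "ideal_in (Rring m) (ideal_pow (Rring m) I n)"
    using ideal_in_ideal_pow[OF is_subring_Rring ideal_in_subset[OF I]] .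
  show "?R \<subseteq> ?L"
  proof
    fix a assume "a \<in> ?R"
    then obtain r where a: "a \<in> Sring m" "emb (tvar m) ^ r * a \<in> ideal_pow (Sring m) (Ltilde m c I) n"
      by (auto simp: saturation_def colon_def)
    then show "a \<in> ?L"
      using Ltilde_tvar_saturated[OF In a(1)] Ltilde_pow_subset[OF I] by blast
  qed
qed

end
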